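(* Let $n\ge1$ and $M\le N$ be integers. For each chain (totally ordered subset) $C$ of pure diagrams lying in $B_{M,N}$, let $\sigma_C=\{\sum_{\pi\in C}\lambda_\pi\pi:\lambda_\pi\ge0\}\subseteq B_{M,N}$. The cones $\sigma_C$ form a simplicial fan; in particular, any element of $B_{M,N}$ that can be written as a linear combination with strictly positive coefficients of the elements of some chain of pure diagrams in $B_{M,N}$ can be written so in exactly one way (the chain and the coefficients are uniquely determined).
   Context: $B_{M,N}$ is the $\mathbb Q$-vector space of arrays $\beta=(\beta_{i,j})$ indexed by $0\le i\le n$, $j\in\mathbb Z$, with $\beta_{i,j}=0$ unless $M+i\le j\le N+i$. For integers $d_0<d_1<\dots<d_t$ with $0\le t\le n$, the pure diagram $\pi(d_0,\dots,d_t)$ is the array whose entry in position $(i,d_i)$ is $(-1)^i\prod_{0\le j\le t,\,j\ne i}\frac{1}{d_j-d_i}$ for $i=0,\dots,t$, and whose other entries are $0$; its codimension is $t$. It lies in $B_{M,N}$ iff $M+i\le d_i\le N+i$ for all $i$. Partial order: $\pi(d_0,\dots,d_t)\le\pi(d'_0,\dots,d'_u)$ iff $t\ge u$ and $d_i\le d'_i$ for $i=0,\dots,u$. *)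

theory Defs
  imports Complex_Main
begin

text \<open>Arrays beta = (beta_{i,j}), i \<in> {0..n}, j \<in> int, rational entries,
  represented as functions nat \<Rightarrow> int \<Rightarrow> rat (zero outside the index range).\<close>

type_synonym diagram = "nat \<Rightarrow> int \<Rightarrow> rat"

definition in_B :: "nat \<Rightarrow> int \<Rightarrow> int \<Rightarrow> diagram \<Rightarrow> bool" where
  "in_B n M N beta \<longleftrightarrow>
     (\<forall>i j. beta i j \<noteq> 0 \<longrightarrow> i \<le> n \<and> M + int i \<le> j \<and> j \<le> N + int i)"

definition degseq :: "nat \<Rightarrow> int list \<Rightarrow> bool" where
  "degseq n d \<longleftrightarrow> d \<noteq> [] \<and> length d \<le> n + 1 \<and> sorted_wrt (<) d"

definition pure :: "int list \<Rightarrow> diagram" where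
  "pure d = (\<lambda>i j. if i < length d \<and> j = d ! i
      then (-1) ^ i * (\<Prod>k \<in> {0..<length d} - {i}. 1 / of_int (d ! k - d ! i))
      else 0)"

text \<open>pi(d) lies in B_{M,N} iff M+i \<le> d_i \<le> N+i for all i.\<close>
definition pure_in_B :: "nat \<Rightarrow> int \<Rightarrow> int \<Rightarrow> int list \<Rightarrow> bool" where
  "pure_in_B n M N d \<longleftrightarrow> degseq n d \<and> in_B n M N (pure d)"

definition pure_le :: "int list \<Rightarrow> int list \<Rightarrow> bool" where
  "pure_le d d' \<longleftrightarrow> length d \<ge> length d' \<and> (\<forall>i < length d'. d ! i \<le> d' ! i)"

text \<open>A chain of pure diagrams in B_{M,N}, indexed by their degree sequences.\<close>
definition is_chain :: "nat \<Rightarrow> int \<Rightarrow> int \<Rightarrow> int list set \<Rightarrow> bool" where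
  "is_chain n M N C \<longleftrightarrow> (\<forall>d \<in> C. pure_in_B n M N d) \<and>
     (\<forall>d \<in> C. \<forall>d' \<in> C. pure_le d d' \<or> pure_le d' d)"

definition comb :: "int list set \<Rightarrow> (int list \<Rightarrow> rat) \<Rightarrow> diagram" where
  "comb C lam = (\<lambda>i j. \<Sum>d \<in> C. lam d * pure d i j)"

definition cone :: "int list set \<Rightarrow> diagram set" where
  "cone C = {comb C lam | lam. \<forall>d \<in> C. lam d \<ge> 0}"

end

theory Submission
  imports Defs
begin

text \<open>Each pure diagram \<open>\<pi>(d)\<close> is nonnegative with support \<open>{(i, d\<^sub>i)}\<close>, so a positive
  combination of a chain has no cancellation: its support is the union of the supports. The
  least element of the chain can be read off that support (its length is the number of rows,
  its entries are the row minima), hence two positive chain decompositions of one diagram share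
  their least element. Subtracting the smaller of its two coefficients from both sides and
  discarding the generators whose coefficient drops to zero, induction on the sizes of the chains
  gives uniqueness. Linear independence and the face property of the cones follow by splitting
  coefficients into their positive and negative parts.\<close>

lemma pure_at_degree_pos:
  assumes "sorted_wrt (<) d" and "i < length d"
  shows "0 < pure d i (d ! i)"
proof -
  let ?f = "\<lambda>k. 1 / of_int (d ! k - d ! i) :: rat"
  have split: "{0..<length d} - {i} = {..<i} \<union> {i<..<length d}"
    using assms(2) by auto
  have "pure d i (d ! i) = ((-1) ^ card {..<i} * prod ?f {..<i}) * prod ?f {i<..<length d}"
    unfolding pure_def split using assms(2) by (subst prod.union_disjoint) (auto simp: mult.assoc)
  also have "\<dots> = (\<Prod>k<i. - ?f k) * prod ?f {i<..<length d}"
    by (simp only: prod_uminus)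
  also have "\<dots> > 0"
    using assms by (intro mult_pos_pos prod_pos) (auto simp: sorted_wrt_nth_less)
  finally show ?thesis .
qed

lemma pure_eq_0_iff:
  assumes "sorted_wrt (<) d"
  shows "pure d i j = 0 \<longleftrightarrow> \<not> (i < length d \<and> j = d ! i)"
proof (cases "i < length d \<and> j = d ! i")
  case True
  then show ?thesis using pure_at_degree_pos[OF assms, of i] by auto
qed (auto simp: pure_def)

lemma pure_nonneg: "sorted_wrt (<) d \<Longrightarrow> 0 \<le> pure d i j"
  by (metis order.refl order_less_le pure_eq_0_iff pure_at_degree_pos)

definition finite_pure_chain :: "int list set \<Rightarrow> bool" where
  "finite_pure_chain C \<longleftrightarrow> finite C \<and> (\<forall>d \<in> C. d \<noteq> [] \<and> sorted_wrt (<) d) \<and>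
     (\<forall>d \<in> C. \<forall>d' \<in> C. pure_le d d' \<or> pure_le d' d)"

definition chain_support :: "int list set \<Rightarrow> (nat \<times> int) set" where
  "chain_support C = {(i, d ! i) | d i. d \<in> C \<and> i < length d}"

lemma finite_pure_chain_subset:
  "finite_pure_chain C \<Longrightarrow> C' \<subseteq> C \<Longrightarrow> finite_pure_chain C'"
  unfolding finite_pure_chain_def by (meson finite_subset subsetD)

lemma pure_le_refl: "pure_le d d"
  by (simp add: pure_le_def)

lemma pure_le_trans: "pure_le a b \<Longrightarrow> pure_le b c \<Longrightarrow> pure_le a c"
  unfolding pure_le_def by (meson order.trans order_less_le_trans)

lemma chain_has_least:
  assumes "finite C" and "C \<noteq> {}" and "\<forall>d \<in> C. \<forall>d' \<in> C. pure_le d d' \<or> pure_le d' d"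
  shows "\<exists>d0 \<in> C. \<forall>d \<in> C. pure_le d0 d"
  using assms
proof (induction C rule: finite_ne_induct)
  case (singleton x)
  then show ?case by (simp add: pure_le_refl)
next
  case (insert x F)
  then obtain d0 where "d0 \<in> F" and least: "\<forall>d \<in> F. pure_le d0 d" by auto
  then show ?case
    using insert.prems pure_le_trans pure_le_refl by (cases "pure_le d0 x") blast+
qed

lemma least_in_chain_support:
  assumes "d0 \<in> C" and "\<forall>d \<in> C. pure_le d0 d"
  shows "(i, j) \<in> chain_support C \<Longrightarrow> i < length d0 \<and> d0 ! i \<le> j"
    and "i < length d0 \<Longrightarrow> (i, d0 ! i) \<in> chain_support C"
  using assms by (auto simp: chain_support_def pure_le_def)

lemma least_determined_by_chain_support:
  assumes "d0 \<in> C" and "\<forall>d \<in> C. pure_le d0 d" and "e0 \<in> D" and "\<forall>d \<in> D. pure_le e0 d"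
    and "chain_support C = chain_support D"
  shows "d0 = e0"
proof -
  note d0 = least_in_chain_support[OF assms(1,2)] and e0 = least_in_chain_support[OF assms(3,4)]
  have same_range: "i < length d0 \<longleftrightarrow> i < length e0" for i
    using d0 e0 assms(5) by blast
  have "length d0 = length e0"
    using same_range[of "length d0"] same_range[of "length e0"] by (meson less_irrefl linorder_neqE_nat)
  moreover have "d0 ! i = e0 ! i" if "i < length d0" for i
  proof (rule order.antisym)
    show "d0 ! i \<le> e0 ! i" using d0(1) e0(2) assms(5) that same_range by blast
    show "e0 ! i \<le> d0 ! i" using d0(2) e0(1) assms(5) that by blast
  qed
  ultimately show ?thesis by (rule nth_equalityI)
qed

lemma comb_ne_0_iff:
  assumes "finite C" and "\<forall>d \<in> C. sorted_wrt (<) d" and "\<forall>d \<in> C. 0 < lam d"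
  shows "comb C lam i j \<noteq> 0 \<longleftrightarrow> (i, j) \<in> chain_support C"
proof -
  have "comb C lam i j = 0 \<longleftrightarrow> (\<forall>d \<in> C. lam d * pure d i j = 0)"
    unfolding comb_def using assms
    by (intro sum_nonneg_eq_0_iff) (auto intro: mult_nonneg_nonneg pure_nonneg less_imp_le)
  also have "\<dots> \<longleftrightarrow> (\<forall>d \<in> C. \<not> (i < length d \<and> j = d ! i))"
    using assms(2,3) by (simp add: pure_eq_0_iff) (metis less_irrefl)
  finally show ?thesis by (auto simp: chain_support_def)
qed

lemma comb_mono_neutral:
  assumes "finite C" and "C' \<subseteq> C" and "\<forall>d \<in> C - C'. lam d = 0"
  shows "comb C lam = comb C' lam"
  unfolding comb_def using assms by (intro ext sum.mono_neutral_right) auto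

lemma comb_restrict_positive:
  assumes "finite C" and "\<forall>d \<in> C. 0 \<le> lam d"
  shows "comb C lam = comb {d \<in> C. 0 < lam d} lam"
  using assms by (intro comb_mono_neutral) force+

lemma comb_decrease_coeff:
  assumes "finite C" and "d \<in> C"
  shows "comb C (lam(d := lam d - c)) = (\<lambda>i j. comb C lam i j - c * pure d i j)"
proof (intro ext)
  fix i j
  have "comb C (lam(d := lam d - c)) i j
      = (lam d - c) * pure d i j + (\<Sum>e \<in> C - {d}. lam e * pure e i j)"
    unfolding comb_def using assms by (simp add: sum.remove)
  also have "\<dots> = comb C lam i j - c * pure d i j"
    unfolding comb_def using assms by (simp add: sum.remove algebra_simps)
  finally show "comb C (lam(d := lam d - c)) i j = comb C lam i j - c * pure d i j" .
qed

lemma comb_eq_imp_positive_parts_eq: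
  assumes "finite C" and "\<forall>d \<in> C. 0 \<le> lam d" and "finite D" and "\<forall>d \<in> D. 0 \<le> mu d"
    and "comb C lam = comb D mu"
  shows "comb {d \<in> C. 0 < lam d} lam = comb {d \<in> D. 0 < mu d} mu"
proof -
  have "comb {d \<in> C. 0 < lam d} lam = comb C lam"
    using comb_restrict_positive[OF assms(1,2)] ..
  also have "\<dots> = comb D mu" by (fact assms(5))
  also have "\<dots> = comb {d \<in> D. 0 < mu d} mu"
    using comb_restrict_positive[OF assms(3,4)] .
  finally show ?thesis .
qed

lemma chain_support_eq_empty_iff:
  "\<forall>d \<in> C. d \<noteq> [] \<Longrightarrow> chain_support C = {} \<longleftrightarrow> C = {}"
  by (fastforce simp: chain_support_def)

lemma positive_comb_chain_support:
  assumes "finite_pure_chain C" and "\<forall>d \<in> C. 0 < lam d"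
    and "finite_pure_chain D" and "\<forall>d \<in> D. 0 < mu d" and "comb C lam = comb D mu"
  shows "chain_support C = chain_support D"
  using comb_ne_0_iff[of C lam] comb_ne_0_iff[of D mu] assms
  by (auto simp: finite_pure_chain_def)

lemma positive_combs_share_generator:
  assumes "finite_pure_chain C" and "\<forall>d \<in> C. 0 < lam d"
    and "finite_pure_chain D" and "\<forall>d \<in> D. 0 < mu d" and "comb C lam = comb D mu"
    and "C \<noteq> {} \<or> D \<noteq> {}"
  shows "\<exists>d0. d0 \<in> C \<and> d0 \<in> D"
proof -
  have supp: "chain_support C = chain_support D"
    using positive_comb_chain_support[OF assms(1-5)] .
  moreover have "\<forall>d \<in> C \<union> D. d \<noteq> []"
    using assms(1,3) by (auto simp: finite_pure_chain_def)
  ultimately have "C \<noteq> {}" and "D \<noteq> {}"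
    using chain_support_eq_empty_iff[of C] chain_support_eq_empty_iff[of D] assms(6) by auto
  then obtain d0 e0 where d0: "d0 \<in> C" "\<forall>d \<in> C. pure_le d0 d"
    and e0: "e0 \<in> D" "\<forall>d \<in> D. pure_le e0 d"
    using chain_has_least[of C] chain_has_least[of D] assms(1,3)
    by (auto simp: finite_pure_chain_def)
  then have "d0 = e0" using least_determined_by_chain_support supp by blast
  with d0 e0 show ?thesis by blast
qed

theorem positive_comb_unique:
  assumes "finite_pure_chain C" and "\<forall>d \<in> C. 0 < lam d"
    and "finite_pure_chain D" and "\<forall>d \<in> D. 0 < mu d" and "comb C lam = comb D mu"
  shows "C = D \<and> (\<forall>d \<in> C. lam d = mu d)"
  using assms
proof (induction "card C + card D" arbitrary: C D lam mu rule: less_induct)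
  case less
  have fin: "finite C" "finite D"
    using less.prems(1,3) by (auto simp: finite_pure_chain_def)
  show ?case
  proof (cases "C = {} \<and> D = {}")
    case False
    then obtain d0 where "d0 \<in> C" and "d0 \<in> D"
      using positive_combs_share_generator[OF less.prems] by blast
    define c where "c = min (lam d0) (mu d0)"
    \<comment> \<open>at least one of the two chains loses \<open>d0\<close>, so the induction measure drops\<close>
    define lam' where "lam' = lam(d0 := lam d0 - c)"
    define mu' where "mu' = mu(d0 := mu d0 - c)"
    define C' where "C' = {d \<in> C. 0 < lam' d}"
    define D' where "D' = {d \<in> D. 0 < mu' d}"
    have lam'_nonneg: "\<forall>d \<in> C. 0 \<le> lam' d" and mu'_nonneg: "\<forall>d \<in> D. 0 \<le> mu' d"
      using less.prems(2,4) by (auto simp: lam'_def mu'_def c_def)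
    have "comb C lam' = comb D mu'"
      unfolding lam'_def mu'_def
      using comb_decrease_coeff[OF fin(1) \<open>d0 \<in> C\<close>] comb_decrease_coeff[OF fin(2) \<open>d0 \<in> D\<close>]
        less.prems(5)
      by simp
    then have comb_eq: "comb C' lam' = comb D' mu'"
      unfolding C'_def D'_def using comb_eq_imp_positive_parts_eq fin lam'_nonneg mu'_nonneg by blast
    have "C' \<subseteq> C" and "D' \<subseteq> D" by (auto simp: C'_def D'_def)
    moreover have "d0 \<notin> C' \<or> d0 \<notin> D'"
      by (auto simp: C'_def D'_def lam'_def mu'_def c_def min_def)
    ultimately have "C' \<subset> C \<or> D' \<subset> D"
      using \<open>d0 \<in> C\<close> \<open>d0 \<in> D\<close> by blast
    then have "card C' + card D' < card C + card D"
      using fin \<open>C' \<subseteq> C\<close> \<open>D' \<subseteq> D\<close> psubset_card_mono card_mono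
      by (metis add_less_le_mono add_le_less_mono)
    moreover have "finite_pure_chain C'" and "finite_pure_chain D'"
      using finite_pure_chain_subset less.prems(1,3) \<open>C' \<subseteq> C\<close> \<open>D' \<subseteq> D\<close> by blast+
    moreover have "\<forall>d \<in> C'. 0 < lam' d" and "\<forall>d \<in> D'. 0 < mu' d"
      by (simp_all add: C'_def D'_def)
    ultimately have "C' = D' \<and> (\<forall>d \<in> C'. lam' d = mu' d)"
      using less.hyps comb_eq by blast
    then have "C' = D'" and agree': "\<forall>d \<in> C'. lam' d = mu' d" by auto
    have "C = insert d0 C'" and "D = insert d0 D'"
      using less.prems(2,4) \<open>d0 \<in> C\<close> \<open>d0 \<in> D\<close> by (auto simp: C'_def D'_def lam'_def mu'_def)
    then have "C = D" using \<open>C' = D'\<close> by simp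
    have "lam' d = mu' d" if "d \<in> C" for d
    proof (cases "d \<in> C'")
      case False
      moreover have "d \<notin> D'" using False \<open>C' = D'\<close> by simp
      ultimately have "\<not> 0 < lam' d" and "\<not> 0 < mu' d"
        using that \<open>C = D\<close> by (simp_all add: C'_def D'_def)
      then show ?thesis
        using that \<open>C = D\<close> lam'_nonneg mu'_nonneg by (metis order.antisym not_less)
    qed (use agree' in blast)
    then have "lam d = mu d" if "d \<in> C" for d
      using that unfolding lam'_def mu'_def by (cases "d = d0") force+
    with \<open>C = D\<close> show ?thesis by blast
  qed simp
qed

corollary nonneg_comb_unique:
  assumes "finite_pure_chain C" and "\<forall>d \<in> C. 0 \<le> lam d"
    and "finite_pure_chain D" and "\<forall>d \<in> D. 0 \<le> mu d" and "comb C lam = comb D mu"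
  shows "{d \<in> C. 0 < lam d} = {d \<in> D. 0 < mu d}
    \<and> (\<forall>d \<in> C. 0 < lam d \<longrightarrow> lam d = mu d)"
proof -
  have "finite C" "finite D" using assms(1,3) by (auto simp: finite_pure_chain_def)
  with assms(2,4,5) have eq: "comb {d \<in> C. 0 < lam d} lam = comb {d \<in> D. 0 < mu d} mu"
    by (intro comb_eq_imp_positive_parts_eq)
  have "finite_pure_chain {d \<in> C. 0 < lam d}" and "finite_pure_chain {d \<in> D. 0 < mu d}"
    by (rule finite_pure_chain_subset[OF assms(1)] finite_pure_chain_subset[OF assms(3)]; blast)+
  from positive_comb_unique[OF this(1) _ this(2) _ eq] show ?thesis by blast
qed

theorem comb_eq_0_imp_coeffs_eq_0:
  assumes "finite_pure_chain C" and "comb C lam = (\<lambda>i j. 0)"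
  shows "\<forall>d \<in> C. lam d = 0"
proof -
  define pos where "pos d = max (lam d) 0" for d
  define neg where "neg d = max (- lam d) 0" for d
  have pos_minus_neg: "pos d - neg d = lam d" for d
    by (simp add: pos_def neg_def)
  have "comb C pos = comb C neg"
  proof (intro ext)
    fix i j
    have "comb C pos i j - comb C neg i j = (\<Sum>d \<in> C. (pos d - neg d) * pure d i j)"
      unfolding comb_def by (simp add: sum_subtractf left_diff_distrib)
    also have "\<dots> = comb C lam i j"
      unfolding comb_def by (simp add: pos_minus_neg)
    finally have "comb C pos i j - comb C neg i j = comb C lam i j" .
    then show "comb C pos i j = comb C neg i j" using assms(2) by simp
  qed
  moreover have "0 \<le> pos d" and "0 \<le> neg d" for d
    by (simp_all add: pos_def neg_def)
  ultimately have "{d \<in> C. 0 < pos d} = {d \<in> C. 0 < neg d}"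
    using nonneg_comb_unique[OF assms(1) _ assms(1)] by blast
  then have "\<not> 0 < lam d" and "\<not> lam d < 0" if "d \<in> C" for d
    using that by (auto simp: pos_def neg_def set_eq_iff)
  then show ?thesis by force
qed

theorem cone_Int_cone:
  assumes C: "finite_pure_chain C" and D: "finite_pure_chain D"
  shows "cone C \<inter> cone D = cone (C \<inter> D)"
proof
  have fin: "finite C" "finite D" using C D by (auto simp: finite_pure_chain_def)
  show "cone (C \<inter> D) \<subseteq> cone C \<inter> cone D"
  proof
    fix x assume "x \<in> cone (C \<inter> D)"
    then obtain lam where x: "x = comb (C \<inter> D) lam" and nonneg: "\<forall>d \<in> C \<inter> D. 0 \<le> lam d"
      by (auto simp: cone_def)
    define lam' where "lam' d = (if d \<in> C \<inter> D then lam d else 0)" for d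
    have "x = comb (C \<inter> D) lam'"
      unfolding x comb_def lam'_def by simp
    moreover have "comb C lam' = comb (C \<inter> D) lam'" "comb D lam' = comb (C \<inter> D) lam'"
      by (rule comb_mono_neutral; auto simp: fin lam'_def)+
    ultimately have "x = comb C lam'" and "x = comb D lam'" by simp_all
    moreover have "\<forall>d. 0 \<le> lam' d" using nonneg by (simp add: lam'_def)
    ultimately show "x \<in> cone C \<inter> cone D" unfolding cone_def by blast
  qed
  show "cone C \<inter> cone D \<subseteq> cone (C \<inter> D)"
  proof
    fix x assume "x \<in> cone C \<inter> cone D"
    then obtain lam mu where x: "x = comb C lam" "x = comb D mu"
      and nonneg: "\<forall>d \<in> C. 0 \<le> lam d" "\<forall>d \<in> D. 0 \<le> mu d"
      unfolding cone_def by blast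
    have "{d \<in> C. 0 < lam d} \<subseteq> D"
      using nonneg_comb_unique[OF C nonneg(1) D nonneg(2)] x by blast
    then have "x = comb (C \<inter> D) lam"
      using comb_mono_neutral[OF fin(1), of "C \<inter> D" lam] nonneg(1) x(1) by force
    then show "x \<in> cone (C \<inter> D)" using nonneg(1) by (auto simp: cone_def)
  qed
qed

lemma is_chain_finite_pure_chain:
  assumes "is_chain n M N C"
  shows "finite_pure_chain C"
proof -
  have "C \<subseteq> {xs. set xs \<subseteq> {M..N + int n} \<and> length xs \<le> n + 1}"
  proof
    fix d assume "d \<in> C"
    then have deg: "degseq n d" and in_B: "in_B n M N (pure d)"
      using assms by (auto simp: is_chain_def pure_in_B_def)
    have "d ! i \<in> {M..N + int n}" if "i < length d" for i
    proof -
      have "pure d i (d ! i) \<noteq> 0"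
        using pure_at_degree_pos[of d i] deg that by (auto simp: degseq_def)
      then have "i \<le> n \<and> M + int i \<le> d ! i \<and> d ! i \<le> N + int i"
        using in_B unfolding in_B_def by blast
      then show ?thesis by auto
    qed
    then show "d \<in> {xs. set xs \<subseteq> {M..N + int n} \<and> length xs \<le> n + 1}"
      using deg by (auto simp: degseq_def in_set_conv_nth)
  qed
  then have "finite C" by (rule finite_subset) (simp add: finite_lists_length_le)
  with assms show ?thesis
    by (auto simp: finite_pure_chain_def is_chain_def pure_in_B_def degseq_def)
qed

theorem proposition3p1:
  fixes n :: nat and M N :: int
  assumes "n \<ge> 1" and "M \<le> N"
  shows
    \<comment> \<open>each cone is simplicial: the generators are linearly independent\<close>
    "(\<forall>C lam. is_chain n M N C \<longrightarrow> comb C lam = (\<lambda>i j. 0) \<longrightarrow> (\<forall>d \<in> C. lam d = 0))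
     \<comment> \<open>the intersection of two cones is the common face\<close>
   \<and> (\<forall>C D. is_chain n M N C \<longrightarrow> is_chain n M N D \<longrightarrow> cone C \<inter> cone D = cone (C \<inter> D))
     \<comment> \<open>uniqueness of positive chain decompositions\<close>
   \<and> (\<forall>C D lam mu. is_chain n M N C \<longrightarrow> is_chain n M N D \<longrightarrow>
        (\<forall>d \<in> C. lam d > 0) \<longrightarrow> (\<forall>d \<in> D. mu d > 0) \<longrightarrow> comb C lam = comb D mu \<longrightarrow>
        C = D \<and> (\<forall>d \<in> C. lam d = mu d))"
proof (intro conjI allI impI)
  fix C lam assume "is_chain n M N C" and "comb C lam = (\<lambda>i j. 0)"
  then show "\<forall>d \<in> C. lam d = 0"
    by (intro comb_eq_0_imp_coeffs_eq_0 is_chain_finite_pure_chain)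
next
  fix C D assume "is_chain n M N C" and "is_chain n M N D"
  then show "cone C \<inter> cone D = cone (C \<inter> D)"
    by (intro cone_Int_cone is_chain_finite_pure_chain)
next
  fix C D lam mu assume "is_chain n M N C" and "is_chain n M N D"
    and "\<forall>d \<in> C. lam d > 0" and "\<forall>d \<in> D. mu d > 0" and "comb C lam = comb D mu"
  then show "C = D" and "\<forall>d \<in> C. lam d = mu d"
    using positive_comb_unique is_chain_finite_pure_chain by blast+
qed

end
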